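(* Let $L$ be a completely regular frame. Then $\overline{\mathrm{H}}(L)$ (with the inclusion $\overline{\mathrm{C}}(L)\subseteq\overline{\mathrm{H}}(L)$) is the Dedekind–MacNeille completion of $\overline{\mathrm{C}}(L)$.
   Context: $\mathbb{Q}$ is the rationals; $a^\ast$ is the pseudocomplement. The frame $\mathfrak{L}(\overline{\mathbb{IR}})$ is presented by generators $(r,\textsf{---})$, $(\textsf{---},s)$ ($r,s\in\mathbb{Q}$) subject to (r1) $(r,\textsf{---})\wedge(\textsf{---},s)=0$ whenever $r\ge s$; (r3) $(r,\textsf{---})=\bigvee_{s>r}(s,\textsf{---})$; (r4) $(\textsf{---},s)=\bigvee_{r<s}(\textsf{---},r)$. $\overline{\mathrm{IC}}(L)$ is the set of frame homomorphisms $\mathfrak{L}(\overline{\mathbb{IR}})\to L$, ordered by $f\le g$ iff $f(r,\textsf{---})\le g(r,\textsf{---})$ and $g(\textsf{---},s)\le f(\textsf{---},s)$ for all $r,s$. $\overline{\mathrm{C}}(L)$ (extended continuous real functions) is the subposet of those $f$ with $f(r,\textsf{---})\vee f(\textsf{---},s)=1$ whenever $r<s$ (equivalently, homomorphisms from the frame of extended reals). $\overline{\mathrm{H}}(L)$ is the subposet of $f\in\overline{\mathrm{IC}}(L)$ with $f(r,\textsf{---})^\ast\le f(\textsf{---},s)$ and $f(\textsf{---},s)^\ast\le f(r,\textsf{---})$ for all $r<s$. A Dedekind–MacNeille completion of a poset $P$ is a join- and meet-dense order embedding of $P$ into a complete lattice. A frame is completely regular if every $a$ is the join of the elements completely below it.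 *)

theory Defs
  imports Complex_Main
begin

definition is_frame :: "('a::complete_lattice) itself \<Rightarrow> bool" where
  "is_frame _ \<longleftrightarrow> (\<forall>(a::'a) S. inf a (Sup S) = Sup ((\<lambda>s. inf a s) ` S))"

definition pcompl :: "'a::complete_lattice \<Rightarrow> 'a" where
  "pcompl a = Sup {x. inf x a = bot}"

definition rather_below :: "'a::complete_lattice \<Rightarrow> 'a \<Rightarrow> bool" where
  "rather_below a b \<longleftrightarrow> sup (pcompl a) b = top"

definition completely_below :: "'a::complete_lattice \<Rightarrow> 'a \<Rightarrow> bool" where
  "completely_below a b \<longleftrightarrow>
     (\<exists>c :: rat \<Rightarrow> 'a. c 0 = a \<and> c 1 = b \<and>
        (\<forall>p q. 0 \<le> p \<longrightarrow> p < q \<longrightarrow> q \<le> 1 \<longrightarrow> rather_below (c p) (c q)))"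

definition completely_regular :: "('a::complete_lattice) itself \<Rightarrow> bool" where
  "completely_regular _ \<longleftrightarrow> (\<forall>a::'a. a = Sup {b. completely_below b a})"

text \<open>By the universal property of the presentation of the frame L(IR-bar),
  a frame homomorphism f : L(IR-bar) \<rightarrow> L is the same as an assignment of the
  generators, u r = f(r,-) and d s = f(-,s), satisfying the relations (r1),(r3),(r4)
  in L.  We represent f by the pair (u, d).\<close>
type_synonym 'a ic = "(rat \<Rightarrow> 'a) \<times> (rat \<Rightarrow> 'a)"

definition IC :: "('a::complete_lattice) ic set" where
  "IC = {(u, d). (\<forall>r s. s \<le> r \<longrightarrow> inf (u r) (d s) = bot)
                \<and> (\<forall>r. u r = Sup (u ` {s. r < s}))
                \<and> (\<forall>s. d s = Sup (d ` {r. r < s}))}"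

definition le_IC :: "('a::complete_lattice) ic \<Rightarrow> 'a ic \<Rightarrow> bool" where
  "le_IC f g \<longleftrightarrow> (\<forall>r. fst f r \<le> fst g r) \<and> (\<forall>s. snd g s \<le> snd f s)"

definition Cbar :: "('a::complete_lattice) ic set" where
  "Cbar = {f \<in> IC. \<forall>r s. r < s \<longrightarrow> sup (fst f r) (snd f s) = top}"

definition Hbar :: "('a::complete_lattice) ic set" where
  "Hbar = {f \<in> IC. \<forall>r s. r < s \<longrightarrow>
              pcompl (fst f r) \<le> snd f s \<and> pcompl (snd f s) \<le> fst f r}"

definition is_lub_in :: "('b \<Rightarrow> 'b \<Rightarrow> bool) \<Rightarrow> 'b set \<Rightarrow> 'b set \<Rightarrow> 'b \<Rightarrow> bool" where
  "is_lub_in le Q S x \<longleftrightarrow> x \<in> Q \<and> (\<forall>y\<in>S. le y x) \<and> (\<forall>z\<in>Q. (\<forall>y\<in>S. le y z) \<longrightarrow> le x z)"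

definition is_glb_in :: "('b \<Rightarrow> 'b \<Rightarrow> bool) \<Rightarrow> 'b set \<Rightarrow> 'b set \<Rightarrow> 'b \<Rightarrow> bool" where
  "is_glb_in le Q S x \<longleftrightarrow> x \<in> Q \<and> (\<forall>y\<in>S. le x y) \<and> (\<forall>z\<in>Q. (\<forall>y\<in>S. le z y) \<longrightarrow> le z x)"

definition partial_order_on_carrier :: "('b \<Rightarrow> 'b \<Rightarrow> bool) \<Rightarrow> 'b set \<Rightarrow> bool" where
  "partial_order_on_carrier le Q \<longleftrightarrow>
     (\<forall>x\<in>Q. le x x) \<and> (\<forall>x\<in>Q. \<forall>y\<in>Q. le x y \<longrightarrow> le y x \<longrightarrow> x = y)
     \<and> (\<forall>x\<in>Q. \<forall>y\<in>Q. \<forall>z\<in>Q. le x y \<longrightarrow> le y z \<longrightarrow> le x z)"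

definition complete_lattice_on :: "('b \<Rightarrow> 'b \<Rightarrow> bool) \<Rightarrow> 'b set \<Rightarrow> bool" where
  "complete_lattice_on le Q \<longleftrightarrow> partial_order_on_carrier le Q \<and>
     (\<forall>S\<subseteq>Q. (\<exists>x. is_lub_in le Q S x) \<and> (\<exists>x. is_glb_in le Q S x))"

definition dm_completion ::
  "('p \<Rightarrow> 'p \<Rightarrow> bool) \<Rightarrow> 'p set \<Rightarrow> ('q \<Rightarrow> 'q \<Rightarrow> bool) \<Rightarrow> 'q set \<Rightarrow> ('p \<Rightarrow> 'q) \<Rightarrow> bool" where
  "dm_completion leP P leQ Q e \<longleftrightarrow>
     complete_lattice_on leQ Q
     \<and> e ` P \<subseteq> Q
     \<and> (\<forall>x\<in>P. \<forall>y\<in>P. leP x y \<longleftrightarrow> leQ (e x) (e y))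
     \<and> (\<forall>q\<in>Q. is_lub_in leQ Q {e p | p. p \<in> P \<and> leQ (e p) q} q)
     \<and> (\<forall>q\<in>Q. is_glb_in leQ Q {e p | p. p \<in> P \<and> leQ q (e p)} q)"

end

theory Submission
  imports Defs
begin

text \<open>An element h of Hbar is determined by its upper part: for z in IC, h \<le> z as soon
  as fst h \<le> fst z, because the defining condition of Hbar bounds snd h from below by the
  pseudocomplements of fst h.  Hence joins in Hbar are obtained by regularising the pointwise
  join w of the upper parts, d s = \<Squnion>{(w t)* | t < s} and u r = \<Squnion>{(d s)* | s > r},
  and Hbar is a complete lattice.  For join-density, complete regularity writes fst h s as the
  join of the elements a completely below it; as in Urysohn's lemma, a scale from a to fst h s,
  reindexed by the rationals below s, yields a continuous c \<le> h with a \<le> fst c r for every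
  r < s.  Meet-density follows from join-density by the order-reversing involution f \<mapsto> -f,
  which preserves IC, Hbar and Cbar.\<close>

lemma SUP_greaterThan_SUP_greaterThan:
  "(SUP t\<in>{r<..}. SUP u\<in>{t<..}. g u) = (SUP u\<in>{(r::'b::dense_linorder)<..}. g u :: 'a::complete_lattice)"
proof -
  have "(\<Union>t\<in>{r<..}. {t<..}) = {r<..}"
    by (auto dest: dense)
  then show ?thesis using SUP_UNION[of g greaterThan "{r<..}"] by simp
qed

lemma SUP_lessThan_SUP_lessThan:
  "(SUP t\<in>{..<s}. SUP u\<in>{..<t}. g u) = (SUP u\<in>{..<(s::'b::dense_linorder)}. g u :: 'a::complete_lattice)"
proof -
  have "(\<Union>t\<in>{..<s}. {..<t}) = {..<s}"
    by (auto dest: dense)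
  then show ?thesis using SUP_UNION[of g lessThan "{..<s}"] by simp
qed

lemma complete_lattice_onI:
  assumes "partial_order_on_carrier le Q" and lub: "\<And>S. S \<subseteq> Q \<Longrightarrow> \<exists>x. is_lub_in le Q S x"
  shows "complete_lattice_on le Q"
proof -
  have "\<exists>x. is_glb_in le Q S x" if "S \<subseteq> Q" for S
  proof -
    obtain x where x: "is_lub_in le Q {z\<in>Q. \<forall>y\<in>S. le z y} x"
      using lub[of "{z\<in>Q. \<forall>y\<in>S. le z y}"] by blast
    then have "is_glb_in le Q S x"
      using that unfolding is_lub_in_def is_glb_in_def by blast
    then show ?thesis ..
  qed
  then show ?thesis
    using assms unfolding complete_lattice_on_def by blast
qed

lemma is_glb_in_image_if_is_lub_in:
  assumes closed: "\<And>x. x \<in> Q \<Longrightarrow> \<phi> x \<in> Q"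
    and involution: "\<And>x. x \<in> Q \<Longrightarrow> \<phi> (\<phi> x) = x"
    and antitone: "\<And>x y. x \<in> Q \<Longrightarrow> y \<in> Q \<Longrightarrow> le (\<phi> x) (\<phi> y) \<longleftrightarrow> le y x"
    and "S \<subseteq> Q" and lub: "is_lub_in le Q S x"
  shows "is_glb_in le Q (\<phi> ` S) (\<phi> x)"
proof -
  have x: "x \<in> Q" using lub unfolding is_lub_in_def by blast
  have "le z (\<phi> x)" if "z \<in> Q" and lower: "\<forall>y\<in>S. le z (\<phi> y)" for z
  proof -
    have "le y (\<phi> z)" if "y \<in> S" for y
      using lower that \<open>S \<subseteq> Q\<close> \<open>z \<in> Q\<close> antitone[of "\<phi> z" y] closed involution by auto
    then have "le x (\<phi> z)"
      using lub closed \<open>z \<in> Q\<close> unfolding is_lub_in_def by blast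
    then show ?thesis
      using antitone[of "\<phi> z" x] closed involution x \<open>z \<in> Q\<close> by auto
  qed
  moreover have "le (\<phi> x) (\<phi> y)" if "y \<in> S" for y
    using lub that \<open>S \<subseteq> Q\<close> x antitone unfolding is_lub_in_def by blast
  ultimately show ?thesis
    using closed x unfolding is_glb_in_def by blast
qed

lemma mem_IC_iff:
  "f \<in> IC \<longleftrightarrow> (\<forall>r s. s \<le> r \<longrightarrow> inf (fst f r) (snd f s) = bot)
               \<and> (\<forall>r. fst f r = (SUP s\<in>{r<..}. fst f s))
               \<and> (\<forall>s. snd f s = (SUP r\<in>{..<s}. snd f r))"
  by (cases f) (simp only: IC_def greaterThan_def lessThan_def mem_Collect_eq prod.case fst_conv snd_conv)

lemma IC_inf_eq_bot: "f \<in> IC \<Longrightarrow> s \<le> r \<Longrightarrow> inf (fst f r) (snd f s) = bot"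
  unfolding mem_IC_iff by blast

lemma IC_fst_eq_SUP: "f \<in> IC \<Longrightarrow> fst f r = (SUP s\<in>{r<..}. fst f s)"
  unfolding mem_IC_iff by blast

lemma IC_snd_eq_SUP: "f \<in> IC \<Longrightarrow> snd f s = (SUP r\<in>{..<s}. snd f r)"
  unfolding mem_IC_iff by blast

lemma IC_fst_antimono:
  assumes "f \<in> IC" and "r \<le> s"
  shows "fst f s \<le> fst f r"
proof (cases "r = s")
  case False
  then have "fst f s \<le> (SUP t\<in>{r<..}. fst f t)"
    using assms(2) by (intro SUP_upper) auto
  also have "\<dots> = fst f r"
    by (rule IC_fst_eq_SUP[OF assms(1), symmetric])
  finally show ?thesis .
qed simp

lemma partial_order_on_carrier_le_IC: "partial_order_on_carrier le_IC Q"
proof -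
  have "f = g" if "le_IC f g" "le_IC g f" for f g :: "'a::complete_lattice ic"
    using that unfolding le_IC_def by (intro prod_eqI ext order_antisym) auto
  then show ?thesis
    unfolding partial_order_on_carrier_def by (auto simp: le_IC_def intro: order_trans)
qed

lemma Hbar_subset_IC: "Hbar \<subseteq> IC"
  by (auto simp: Hbar_def)

definition ic_of :: "(rat \<Rightarrow> 'a::complete_lattice) \<Rightarrow> (rat \<Rightarrow> 'a) \<Rightarrow> 'a ic" where
  "ic_of g h = (\<lambda>r. SUP t\<in>{r<..}. g t, \<lambda>s. SUP t\<in>{..<s}. h t)"

lemma fst_ic_of: "fst (ic_of g h) r = (SUP t\<in>{r<..}. g t)"
  and snd_ic_of: "snd (ic_of g h) s = (SUP t\<in>{..<s}. h t)"
  by (simp_all add: ic_of_def)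

definition neg_ic :: "'a::complete_lattice ic \<Rightarrow> 'a ic" where
  "neg_ic f = (\<lambda>r. snd f (- r), \<lambda>s. fst f (- s))"

lemma fst_neg_ic[simp]: "fst (neg_ic f) r = snd f (- r)"
  and snd_neg_ic[simp]: "snd (neg_ic f) s = fst f (- s)"
  by (simp_all add: neg_ic_def)

lemma neg_ic_neg_ic[simp]: "neg_ic (neg_ic f) = f"
  by (simp add: neg_ic_def)

lemma le_IC_neg_ic_iff: "le_IC (neg_ic f) (neg_ic g) \<longleftrightarrow> le_IC g f"
  unfolding le_IC_def by (metis fst_neg_ic snd_neg_ic minus_minus)

lemma SUP_greaterThan_uminus:
  "(SUP t\<in>{(r::'b::ordered_ab_group_add)<..}. g (- t)) = (SUP t\<in>{..<- r}. g t :: 'a::complete_lattice)"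
proof -
  have "(SUP t\<in>{..<- r}. g t) = (SUP t\<in>uminus ` {r<..}. g t)" by simp
  then show ?thesis by (simp only: image_image)
qed

lemma SUP_lessThan_uminus:
  "(SUP t\<in>{..<(s::'b::ordered_ab_group_add)}. g (- t)) = (SUP t\<in>{- s<..}. g t :: 'a::complete_lattice)"
proof -
  have "(SUP t\<in>{- s<..}. g t) = (SUP t\<in>uminus ` {..<s}. g t)" by simp
  then show ?thesis by (simp only: image_image)
qed

lemma neg_ic_mem_IC:
  assumes "f \<in> IC"
  shows "neg_ic f \<in> IC"
proof -
  have "inf (snd f (- r)) (fst f (- s)) = bot" if "s \<le> r" for r s
    using IC_inf_eq_bot[OF assms, where r="- s" and s="- r"] that by (simp add: inf_commute)
  moreover have "snd f (- r) = (SUP t\<in>{r<..}. snd f (- t))" for r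
    unfolding SUP_greaterThan_uminus by (rule IC_snd_eq_SUP[OF assms])
  moreover have "fst f (- s) = (SUP t\<in>{..<s}. fst f (- t))" for s
    unfolding SUP_lessThan_uminus by (rule IC_fst_eq_SUP[OF assms])
  ultimately show ?thesis
    unfolding mem_IC_iff fst_neg_ic snd_neg_ic by blast
qed

lemma neg_ic_mem_Cbar: "f \<in> Cbar \<Longrightarrow> neg_ic f \<in> Cbar"
  by (auto simp: Cbar_def neg_ic_mem_IC sup_commute)

lemma neg_ic_mem_Hbar: "f \<in> Hbar \<Longrightarrow> neg_ic f \<in> Hbar"
  by (auto simp: Hbar_def neg_ic_mem_IC)

lemma rather_below_bot: "rather_below bot (b::'a::complete_lattice)"
  by (simp add: rather_below_def pcompl_def)

locale frame =
  fixes frame_type :: "'a::complete_lattice itself"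
  assumes is_frame: "is_frame frame_type"
begin

lemma inf_Sup_distrib: "inf (a::'a) (Sup S) = (SUP s\<in>S. inf a s)"
  using is_frame unfolding is_frame_def by blast

lemma inf_sup_distrib_left: "inf (a::'a) (sup b c) = sup (inf a b) (inf a c)"
  using inf_Sup_distrib[of a "{b, c}"] by simp

lemma Sup_inf_Sup_eq_bot:
  assumes "\<And>x y. x \<in> X \<Longrightarrow> y \<in> Y \<Longrightarrow> inf x y = bot"
  shows "inf (Sup X) (Sup (Y::'a set)) = bot"
proof -
  have "inf (Sup X) y = bot" if "y \<in> Y" for y
    using assms that by (simp add: inf_commute[of "Sup X"] inf_Sup_distrib inf_commute)
  then show ?thesis by (simp add: inf_Sup_distrib)
qed

lemma le_pcompl_iff: "x \<le> pcompl (a::'a) \<longleftrightarrow> inf x a = bot"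
proof
  assume "x \<le> pcompl a"
  moreover have "inf (pcompl a) a = bot"
    unfolding pcompl_def using Sup_inf_Sup_eq_bot[of _ "{a}"] by fastforce
  ultimately show "inf x a = bot"
    by (metis inf_mono order_refl bot_unique)
qed (simp add: pcompl_def Sup_upper)

lemma pcompl_inf_self: "inf (pcompl a) (a::'a) = bot"
  using le_pcompl_iff by blast

lemma pcompl_antimono: "a \<le> b \<Longrightarrow> pcompl b \<le> pcompl (a::'a)"
  using inf_mono[OF order_refl[of "pcompl b"], of a b]
  by (simp add: le_pcompl_iff pcompl_inf_self bot_unique)

lemma pcompl_inf_eq_bot: "b \<le> a \<Longrightarrow> inf (pcompl a) (b::'a) = bot"
  using inf_mono[OF order_refl[of "pcompl a"], of b a] by (simp add: pcompl_inf_self bot_unique)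

lemma le_pcompl_pcompl: "(a::'a) \<le> pcompl (pcompl a)"
  by (simp add: le_pcompl_iff inf_commute[of a] pcompl_inf_self)

lemma pcompl_le_if_sup_eq_top:
  assumes "sup a b = (top::'a)"
  shows "pcompl a \<le> b"
proof -
  have "pcompl a = inf (pcompl a) (sup a b)" using assms by simp
  also have "\<dots> = inf (pcompl a) b" by (simp add: inf_sup_distrib_left pcompl_inf_self)
  finally show ?thesis by (metis inf.cobounded2)
qed

lemma rather_below_imp_le:
  assumes "rather_below a (b::'a)"
  shows "a \<le> b"
proof -
  have "a = inf a (sup (pcompl a) b)" using assms unfolding rather_below_def by simp
  also have "\<dots> = inf a b" by (simp add: inf_sup_distrib_left inf_commute[of a] pcompl_inf_self)
  finally show ?thesis by (metis inf.cobounded2)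
qed

lemma ic_of_mem_IC:
  assumes "\<And>t t'. t' < t \<Longrightarrow> inf (g t) (h t') = (bot::'a)"
  shows "ic_of g h \<in> IC"
  using assms
  unfolding mem_IC_iff fst_ic_of snd_ic_of SUP_greaterThan_SUP_greaterThan SUP_lessThan_SUP_lessThan
  by (auto intro!: Sup_inf_Sup_eq_bot)

lemma IC_snd_le_pcompl_fst: "f \<in> IC \<Longrightarrow> snd f t \<le> pcompl (fst f t :: 'a)"
  by (simp add: le_pcompl_iff IC_inf_eq_bot inf_commute)

lemma Cbar_subset_Hbar: "Cbar \<subseteq> (Hbar :: 'a ic set)"
  by (auto simp: Cbar_def Hbar_def sup_commute intro!: pcompl_le_if_sup_eq_top)

lemma le_IC_iff_fst_le:
  assumes h: "h \<in> Hbar" and z: "z \<in> IC"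
  shows "le_IC h z \<longleftrightarrow> (\<forall>r. fst h r \<le> (fst z r :: 'a))"
proof (intro iffI)
  assume le: "\<forall>r. fst h r \<le> fst z r"
  have "snd z s \<le> snd h s" for s
  proof -
    have "snd z t \<le> snd h s" if "t < s" for t
    proof -
      have "snd z t \<le> pcompl (fst z t)" using z by (rule IC_snd_le_pcompl_fst)
      also have "\<dots> \<le> pcompl (fst h t)" using le by (simp add: pcompl_antimono)
      also have "\<dots> \<le> snd h s" using h that by (simp add: Hbar_def)
      finally show ?thesis .
    qed
    then show ?thesis by (subst IC_snd_eq_SUP[OF z]) (auto intro: SUP_least)
  qed
  then show "le_IC h z" using le unfolding le_IC_def by blast
qed (simp add: le_IC_def)

definition Hbar_hull :: "(rat \<Rightarrow> 'a) \<Rightarrow> 'a ic" where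
  "Hbar_hull w =
     (let d = (\<lambda>s. SUP t\<in>{..<s}. pcompl (w t)) in ic_of (\<lambda>s. pcompl (d s)) (\<lambda>t. pcompl (w t)))"

lemma snd_Hbar_hull: "snd (Hbar_hull w) s = (SUP t\<in>{..<s}. pcompl (w t))"
  by (simp add: Hbar_hull_def snd_ic_of)

lemma fst_Hbar_hull: "fst (Hbar_hull w) r = (SUP s\<in>{r<..}. pcompl (snd (Hbar_hull w) s))"
  by (simp add: Hbar_hull_def fst_ic_of snd_ic_of)

lemma Hbar_hull_mem_IC: "Hbar_hull w \<in> IC"
  unfolding Hbar_hull_def Let_def
proof (rule ic_of_mem_IC)
  fix t t' :: rat
  assume "t' < t"
  then have "pcompl (w t') \<le> (SUP u\<in>{..<t}. pcompl (w u))"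
    by (intro SUP_upper) auto
  then show "inf (pcompl (SUP u\<in>{..<t}. pcompl (w u))) (pcompl (w t')) = bot"
    by (rule pcompl_inf_eq_bot)
qed

lemma le_fst_Hbar_hull:
  assumes w: "\<And>r. w r = (SUP s\<in>{r<..}. w s)"
  shows "w r \<le> fst (Hbar_hull w) r"
proof -
  have "w s \<le> pcompl (snd (Hbar_hull w) s)" for s
  proof -
    have "pcompl (w t) \<le> pcompl (w s)" if "t < s" for t
      using w[of t] that by (intro pcompl_antimono) (auto intro: SUP_upper)
    then have "snd (Hbar_hull w) s \<le> pcompl (w s)"
      unfolding snd_Hbar_hull by (auto intro: SUP_least)
    then show ?thesis
      using le_pcompl_pcompl[of "w s"] pcompl_antimono order_trans by blast
  qed
  then show ?thesis
    unfolding w[of r] fst_Hbar_hull by (rule SUP_mono')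
qed

lemma Hbar_hull_mem_Hbar:
  assumes "\<And>r. w r = (SUP s\<in>{r<..}. w s)"
  shows "Hbar_hull w \<in> Hbar"
proof -
  have "pcompl (fst (Hbar_hull w) r) \<le> snd (Hbar_hull w) s" if "r < s" for r s
  proof -
    have "pcompl (fst (Hbar_hull w) r) \<le> pcompl (w r)"
      using le_fst_Hbar_hull[OF assms] by (rule pcompl_antimono)
    also have "\<dots> \<le> snd (Hbar_hull w) s"
      unfolding snd_Hbar_hull using that by (intro SUP_upper) auto
    finally show ?thesis .
  qed
  moreover have "pcompl (snd (Hbar_hull w) s) \<le> fst (Hbar_hull w) r" if "r < s" for r s
    unfolding fst_Hbar_hull[of w r] using that by (intro SUP_upper) auto
  ultimately show ?thesis
    using Hbar_hull_mem_IC unfolding Hbar_def by blast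
qed

lemma Hbar_hull_least:
  assumes z: "z \<in> Hbar" and le: "\<And>t. w t \<le> (fst z t :: 'a)"
  shows "le_IC (Hbar_hull w) z"
proof -
  have zIC: "z \<in> IC" using z by (simp add: Hbar_def)
  have snd_le: "snd z s \<le> snd (Hbar_hull w) s" for s
  proof -
    have "snd z t \<le> pcompl (w t)" for t
      using IC_snd_le_pcompl_fst[OF zIC] pcompl_antimono[OF le] order_trans by blast
    then show ?thesis
      unfolding snd_Hbar_hull by (subst IC_snd_eq_SUP[OF zIC]) (rule SUP_mono', auto)
  qed
  have "fst (Hbar_hull w) r \<le> fst z r" for r
  proof -
    have "pcompl (snd (Hbar_hull w) s) \<le> fst z r" if "r < s" for s
      using pcompl_antimono[OF snd_le[of s]] z that unfolding Hbar_def by (blast intro: order_trans)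
    then show ?thesis unfolding fst_Hbar_hull[of w r] by (auto intro: SUP_least)
  qed
  then show ?thesis using snd_le unfolding le_IC_def by blast
qed

lemma Hbar_lub:
  assumes S: "S \<subseteq> (Hbar :: 'a ic set)"
  shows "is_lub_in le_IC Hbar S (Hbar_hull (\<lambda>r. SUP f\<in>S. fst f r))"
proof -
  define w where "w = (\<lambda>r. SUP f\<in>S. fst f r)"
  have w_eq: "w r = (SUP s\<in>{r<..}. w s)" for r
  proof -
    have "fst f r = (SUP s\<in>{r<..}. fst f s)" if "f \<in> S" for f
      using S that Hbar_subset_IC by (intro IC_fst_eq_SUP) blast
    then have "w r = (SUP f\<in>S. SUP s\<in>{r<..}. fst f s)"
      unfolding w_def by (rule SUP_cong[OF refl])
    also have "\<dots> = (SUP s\<in>{r<..}. w s)"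
      unfolding w_def by (rule SUP_commute)
    finally show ?thesis .
  qed
  have "le_IC f (Hbar_hull w)" if "f \<in> S" for f
  proof -
    have "fst f r \<le> w r" for r
      unfolding w_def using that by (rule SUP_upper)
    then have "fst f r \<le> fst (Hbar_hull w) r" for r
      using le_fst_Hbar_hull[OF w_eq, of r] by (rule order_trans)
    moreover have "f \<in> Hbar" using S that by blast
    ultimately show ?thesis
      using le_IC_iff_fst_le[OF _ Hbar_hull_mem_IC] by blast
  qed
  moreover have "le_IC (Hbar_hull w) z" if "z \<in> Hbar" and "\<forall>f\<in>S. le_IC f z" for z
  proof (rule Hbar_hull_least[OF \<open>z \<in> Hbar\<close>])
    show "w t \<le> fst z t" for t
      unfolding w_def using that(2) by (simp add: le_IC_def SUP_least)
  qed
  ultimately have "is_lub_in le_IC Hbar S (Hbar_hull w)"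
    unfolding is_lub_in_def using Hbar_hull_mem_Hbar[OF w_eq]
    by (intro conjI ballI impI) simp_all
  then show ?thesis
    unfolding w_def .
qed

lemma Hbar_complete_lattice: "complete_lattice_on le_IC (Hbar :: 'a ic set)"
  using Hbar_lub by (intro complete_lattice_onI[OF partial_order_on_carrier_le_IC]) blast

lemma completely_below_rat_scale:
  assumes "completely_below a (b::'a)"
  obtains E :: "rat \<Rightarrow> 'a"
  where "\<And>t t'. t' < t \<Longrightarrow> rather_below (E t) (E t')"
    and "\<And>t. E t \<le> b" and "\<And>t. t < s \<Longrightarrow> a \<le> E t" and "\<And>t. s \<le> t \<Longrightarrow> E t = bot"
proof -
  obtain e :: "rat \<Rightarrow> 'a" where e0: "e 0 = a" and e1: "e 1 = b"
    and e: "\<And>p q. 0 \<le> p \<Longrightarrow> p < q \<Longrightarrow> q \<le> 1 \<Longrightarrow> rather_below (e p) (e q)"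
    using assms unfolding completely_below_def by blast
  \<comment> \<open>a decreasing bijection from {..<s} onto the open unit interval\<close>
  define \<psi> :: "rat \<Rightarrow> rat" where "\<psi> t = (s - t) / (1 + s - t)" for t
  have \<psi>_range: "0 < \<psi> t" "\<psi> t < 1" if "t < s" for t
    using that by (simp_all add: \<psi>_def field_simps)
  have \<psi>_strict_antimono: "\<psi> t < \<psi> t'" if "t' < t" "t < s" for t t'
    using that by (simp add: \<psi>_def field_simps)
  define E where "E t = (if t < s then e (\<psi> t) else bot)" for t
  show thesis
  proof
    fix t t' :: rat
    assume "t' < t"
    show "rather_below (E t) (E t')"
    proof (cases "t < s")
      case True
      then show ?thesis
        using e[of "\<psi> t" "\<psi> t'"] \<psi>_range \<psi>_strict_antimono \<open>t' < t\<close>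
        by (simp add: E_def less_imp_le)
    qed (simp add: E_def rather_below_bot)
  next
    fix t :: rat
    show "E t \<le> b"
      using rather_below_imp_le[OF e[of "\<psi> t" 1]] \<psi>_range e1 by (simp add: E_def less_imp_le)
  next
    fix t :: rat
    assume "t < s"
    then show "a \<le> E t"
      using rather_below_imp_le[OF e[of 0 "\<psi> t"]] \<psi>_range e0 by (simp add: E_def less_imp_le)
  next
    fix t :: rat
    assume "s \<le> t"
    then show "E t = bot" by (simp add: E_def)
  qed
qed

lemma scale_mem_Cbar:
  assumes E: "\<And>t t'. t' < t \<Longrightarrow> rather_below (E t) (E t' :: 'a)"
  shows "ic_of E (\<lambda>t. pcompl (E t)) \<in> Cbar"
proof -
  define c where "c = ic_of E (\<lambda>t. pcompl (E t))"
  have "c \<in> IC"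
    unfolding c_def
  proof (rule ic_of_mem_IC)
    fix t t' :: rat
    assume "t' < t"
    then show "inf (E t) (pcompl (E t')) = bot"
      using pcompl_inf_eq_bot[OF rather_below_imp_le[OF E]] by (simp add: inf_commute)
  qed
  moreover have "sup (fst c r) (snd c s) = top" if "r < s" for r s
  proof -
    obtain m1 m2 where m: "r < m1" "m1 < m2" "m2 < s"
      using dense[OF \<open>r < s\<close>] dense by blast
    have "E m1 \<le> fst c r"
      unfolding c_def fst_ic_of using m by (intro SUP_upper) auto
    moreover have "pcompl (E m2) \<le> snd c s"
      unfolding c_def snd_ic_of using m by (intro SUP_upper) auto
    ultimately have "sup (pcompl (E m2)) (E m1) \<le> sup (fst c r) (snd c s)"
      by (simp add: le_supI1 le_supI2)
    moreover have "sup (pcompl (E m2)) (E m1) = top"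
      using E[OF \<open>m1 < m2\<close>] unfolding rather_below_def .
    ultimately show ?thesis by (simp add: top_unique)
  qed
  ultimately show ?thesis unfolding Cbar_def c_def by blast
qed

lemma ex_Cbar_below_with_fst_ge:
  assumes h: "h \<in> IC" and "r < s" and "completely_below a (fst h s :: 'a)"
  shows "\<exists>c\<in>Cbar. le_IC c h \<and> a \<le> fst c r"
proof -
  obtain E where E_scale: "\<And>t t'. t' < t \<Longrightarrow> rather_below (E t) (E t')"
    and E_le: "\<And>t. E t \<le> fst h s" and E_ge: "\<And>t. t < s \<Longrightarrow> a \<le> E t"
    and E_bot: "\<And>t. s \<le> t \<Longrightarrow> E t = bot"
    using completely_below_rat_scale[OF assms(3), where s = s] by blast
  define c where "c = ic_of E (\<lambda>t. pcompl (E t))"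
  have c: "c \<in> Cbar" unfolding c_def using E_scale by (rule scale_mem_Cbar)
  have "fst c t \<le> fst h t" for t
  proof (cases "t < s")
    case True
    have "fst c t \<le> fst h s" unfolding c_def fst_ic_of using E_le by (rule SUP_least)
    also have "\<dots> \<le> fst h t" using IC_fst_antimono[OF h] True by simp
    finally show ?thesis .
  next
    case False
    then have "fst c t = bot" unfolding c_def fst_ic_of by (simp add: E_bot)
    then show ?thesis by simp
  qed
  then have "le_IC c h" using le_IC_iff_fst_le[OF _ h] c Cbar_subset_Hbar by blast
  moreover have "a \<le> fst c r"
  proof -
    obtain m where "r < m" "m < s" using dense[OF \<open>r < s\<close>] by blast
    then have "E m \<le> fst c r" unfolding c_def fst_ic_of by (intro SUP_upper) auto
    then show ?thesis using E_ge[OF \<open>m < s\<close>] by (rule order_trans[rotated])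
  qed
  ultimately show ?thesis using c by blast
qed

lemma fst_eq_SUP_Cbar_below:
  assumes CR: "completely_regular TYPE('a)" and h: "h \<in> IC"
  shows "fst h r = (SUP c\<in>{c\<in>Cbar. le_IC c h}. fst c r :: 'a)"
proof (rule antisym)
  have "fst h s \<le> (SUP c\<in>{c\<in>Cbar. le_IC c h}. fst c r)" if "r < s" for s
  proof -
    have "a \<le> (SUP c\<in>{c\<in>Cbar. le_IC c h}. fst c r)" if "completely_below a (fst h s)" for a
      using ex_Cbar_below_with_fst_ge[OF h \<open>r < s\<close> that] by (force intro: SUP_upper2)
    then have "Sup {a. completely_below a (fst h s)} \<le> (SUP c\<in>{c\<in>Cbar. le_IC c h}. fst c r)"
      by (auto intro: Sup_least)
    then show ?thesis using CR unfolding completely_regular_def by metis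
  qed
  then show "fst h r \<le> (SUP c\<in>{c\<in>Cbar. le_IC c h}. fst c r)"
    by (subst IC_fst_eq_SUP[OF h]) (auto intro: SUP_least)
  show "(SUP c\<in>{c\<in>Cbar. le_IC c h}. fst c r) \<le> fst h r"
    by (auto simp: le_IC_def intro: SUP_least)
qed

lemma Cbar_join_dense:
  assumes CR: "completely_regular TYPE('a)" and h: "h \<in> (Hbar :: 'a ic set)"
  shows "is_lub_in le_IC Hbar {c\<in>Cbar. le_IC c h} h"
proof -
  have "le_IC h z" if z: "z \<in> Hbar" and ub: "\<forall>c\<in>{c\<in>Cbar. le_IC c h}. le_IC c z" for z
  proof -
    have "fst h r \<le> fst z r" for r
      using ub h Hbar_subset_IC
      by (subst fst_eq_SUP_Cbar_below[OF CR, of h]) (auto simp: le_IC_def intro: SUP_least)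
    then show ?thesis using le_IC_iff_fst_le[OF h] z Hbar_subset_IC by blast
  qed
  then show ?thesis unfolding is_lub_in_def using h by (simp add: le_IC_def)
qed

lemma Cbar_meet_dense:
  assumes CR: "completely_regular TYPE('a)" and h: "h \<in> (Hbar :: 'a ic set)"
  shows "is_glb_in le_IC Hbar {c\<in>Cbar. le_IC h c} h"
proof -
  let ?A = "{c\<in>Cbar. le_IC c (neg_ic h)}"
  have "is_lub_in le_IC Hbar ?A (neg_ic h)"
    by (rule Cbar_join_dense[OF CR neg_ic_mem_Hbar[OF h]])
  then have "is_glb_in le_IC Hbar (neg_ic ` ?A) (neg_ic (neg_ic h))"
  proof (rule is_glb_in_image_if_is_lub_in[rotated -1])
    show "?A \<subseteq> Hbar" using Cbar_subset_Hbar by blast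
  qed (simp_all add: neg_ic_mem_Hbar le_IC_neg_ic_iff)
  moreover have "neg_ic ` ?A = {c\<in>Cbar. le_IC h c}"
  proof
    show "neg_ic ` ?A \<subseteq> {c\<in>Cbar. le_IC h c}"
      using le_IC_neg_ic_iff[of "neg_ic h"] neg_ic_mem_Cbar by auto
    show "{c\<in>Cbar. le_IC h c} \<subseteq> neg_ic ` ?A"
    proof
      fix c
      assume "c \<in> {c\<in>Cbar. le_IC h c}"
      then have "neg_ic c \<in> ?A"
        using le_IC_neg_ic_iff[of c h] neg_ic_mem_Cbar by blast
      then show "c \<in> neg_ic ` ?A" by (rule rev_image_eqI) simp
    qed
  qed
  ultimately show ?thesis by simp
qed

end

theorem proposition3p7:
  assumes "is_frame TYPE('a::complete_lattice)"
    and "completely_regular TYPE('a)"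
  shows "Cbar \<subseteq> (Hbar :: 'a ic set) \<and> dm_completion le_IC Cbar le_IC (Hbar :: 'a ic set) id"
proof -
  interpret frame "TYPE('a)"
    by (rule frame.intro) (rule assms(1))
  show ?thesis
    unfolding dm_completion_def
    using Hbar_complete_lattice Cbar_subset_Hbar Cbar_join_dense[OF assms(2)] Cbar_meet_dense[OF assms(2)]
    by simp
qed

end
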